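(* Let $(V,E^+\uplus E^-)$ be a Correlation Clustering instance with optimum cost $\mathrm{opt}$, let $\mathcal C$ be a clustering of $V$ with $\mathrm{obj}(\mathcal C)\le3\,\mathrm{opt}$, let $\beta=0.1$, and let $\mathcal K$ be the partition of $V$ constructed from $\mathcal C$ as described in the context. Then for every non-singleton atom $K\in\mathcal K$ and every $u\in K$, $|N^+_u\triangle K|<\beta|K|$.
   Context: A Correlation Clustering instance consists of a finite vertex set $V$ and a partition $E^+\uplus E^-=\binom V2$ of unordered pairs of distinct vertices into $+$edges and $-$edges. For a clustering (partition) $\mathcal C$ of $V$, $\mathrm{obj}(\mathcal C)$ is the number of $+$edges between different parts plus the number of $-$edges inside parts; $\mathrm{opt}$ is its minimum. By convention every vertex has a $+$ self-loop, so the set $N^+_u$ of $+$neighbours of $u$ contains $u$. $A\triangle B$ denotes symmetric difference. Construction of $\mathcal K$ with $\beta=0.1$: for every non-singleton $C\in\mathcal C$, mark every $u\in C$ with $|N^+_u\triangle C|>\frac\beta2|C|$, and then, if at least $\frac{\beta|C|}{3}$ vertices of $C$ are marked, mark all vertices of $C$. $\mathcal K$ is obtained from $\mathcal C$ by removing every marked vertex from its cluster and making it a singleton cluster. The parts of $\mathcal K$ are called atoms. *)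

theory Defs
  imports Complex_Main "HOL-Library.Disjoint_Sets"
begin

definition pairs :: "'a set \<Rightarrow> 'a set set" where
  "pairs V = {{u, v} | u v. u \<in> V \<and> v \<in> V \<and> u \<noteq> v}"

text \<open>An instance is given by V and the set Ep of +edges (Ep a subset of pairs V);
  the -edges are pairs V - Ep.\<close>
definition cc_instance :: "'a set \<Rightarrow> 'a set set \<Rightarrow> bool" where
  "cc_instance V Ep \<longleftrightarrow> finite V \<and> Ep \<subseteq> pairs V"

text \<open>+neighbourhood, including the +self-loop.\<close>
definition Nplus :: "'a set set \<Rightarrow> 'a \<Rightarrow> 'a set" where
  "Nplus Ep u = insert u {v. {u, v} \<in> Ep}"

definition obj :: "'a set \<Rightarrow> 'a set set \<Rightarrow> 'a set set \<Rightarrow> nat" where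
  "obj V Ep P = card {e \<in> Ep. \<not> (\<exists>C\<in>P. e \<subseteq> C)}
              + card {e \<in> pairs V - Ep. \<exists>C\<in>P. e \<subseteq> C}"

definition opt :: "'a set \<Rightarrow> 'a set set \<Rightarrow> nat" where
  "opt V Ep = Min {obj V Ep P | P. partition_on V P}"

definition bad :: "real \<Rightarrow> 'a set set \<Rightarrow> 'a set \<Rightarrow> 'a \<Rightarrow> bool" where
  "bad \<beta> Ep C u \<longleftrightarrow> u \<in> C \<and>
     real (card ((Nplus Ep u - C) \<union> (C - Nplus Ep u))) > \<beta> / 2 * real (card C)"

text \<open>Marked vertices (after both rounds), over non-singleton clusters of the clustering P.\<close>
definition marked :: "real \<Rightarrow> 'a set set \<Rightarrow> 'a set set \<Rightarrow> 'a \<Rightarrow> bool" where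
  "marked \<beta> Ep P u \<longleftrightarrow> (\<exists>C\<in>P. card C \<ge> 2 \<and> u \<in> C \<and>
      (bad \<beta> Ep C u \<or> real (card {v \<in> C. bad \<beta> Ep C v}) \<ge> \<beta> * real (card C) / 3))"

definition atoms :: "real \<Rightarrow> 'a set set \<Rightarrow> 'a set set \<Rightarrow> 'a set set" where
  "atoms \<beta> Ep P =
     {C - {u. marked \<beta> Ep P u} | C. C \<in> P \<and> C - {u. marked \<beta> Ep P u} \<noteq> {}}
     \<union> {{u} | u. u \<in> \<Union>P \<and> marked \<beta> Ep P u}"

end

theory Submission
  imports Defs
begin

text \<open>
  A non-singleton atom K is a cluster C of the clustering with its marked vertices removed,
  and C itself escaped the second marking round, so fewer than \<open>\<beta>|C|/3\<close> of its vertices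
  are bad and every vertex of C - K is bad. A vertex u of K is not bad, so
  \<open>|N\<^sup>+\<^sub>u \<triangle> C| \<le> \<beta>|C|/2\<close>, and the triangle inequality for symmetric differences gives
  \<open>|N\<^sup>+\<^sub>u \<triangle> K| \<le> \<beta>|C|/2 + |C - K|\<close>. Since \<open>|K| = |C| - |C - K|\<close>, this is below
  \<open>\<beta>|K|\<close> whenever \<open>\<beta> \<le> 1/2\<close>.
\<close>

lemma card_symdiff_triangle:
  assumes "finite A" "finite B" "finite C"
  shows "card (sym_diff A C) \<le> card (sym_diff A B) + card (sym_diff B C)"
proof -
  have "card (sym_diff A C) \<le> card (sym_diff A B \<union> sym_diff B C)"
    by (rule card_mono) (use assms in auto)
  also have "\<dots> \<le> card (sym_diff A B) + card (sym_diff B C)"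
    by (rule card_Un_le)
  finally show ?thesis .
qed

lemma card_symdiff_less_after_removal:
  fixes \<beta> :: real
  assumes "finite N" "finite C" "K \<subseteq> C" "\<beta> \<le> 1/2"
    and close: "real (card (sym_diff N C)) \<le> \<beta> / 2 * real (card C)"
    and few_removed: "real (card (C - K)) < \<beta> / 3 * real (card C)"
  shows "real (card (sym_diff N K)) < \<beta> * real (card K)"
proof -
  have "finite K" using assms(2,3) by (rule finite_subset[rotated])
  have "sym_diff C K = C - K" using assms(3) by blast
  then have "card (sym_diff N K) \<le> card (sym_diff N C) + card (C - K)"
    using card_symdiff_triangle[OF \<open>finite N\<close> \<open>finite C\<close> \<open>finite K\<close>] by simp
  moreover have "real (card K) = real (card C) - real (card (C - K))"
    using card_Diff_subset[OF \<open>finite K\<close> assms(3)] card_mono[OF assms(2,3)] by simp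
  moreover have "\<beta> * real (card (C - K)) \<le> 1/2 * real (card (C - K))"
    using \<open>\<beta> \<le> 1/2\<close> by (intro mult_right_mono) simp_all
  ultimately show ?thesis
    using close few_removed by (simp add: right_diff_distrib)
qed

lemma finite_Nplus:
  assumes "cc_instance V Ep"
  shows "finite (Nplus Ep u)"
proof -
  have "Nplus Ep u \<subseteq> insert u V"
    using assms unfolding Nplus_def cc_instance_def pairs_def by blast
  then show ?thesis
    using assms unfolding cc_instance_def by (simp add: finite_subset)
qed

lemma nonsingleton_atomE:
  assumes "K \<in> atoms \<beta> Ep P" "card K \<ge> 2"
  obtains C where "C \<in> P" "K = C - {v. marked \<beta> Ep P v}"
  using assms unfolding atoms_def by fastforce

lemma unmarkedD:
  assumes "C \<in> P" "card C \<ge> 2" "u \<in> C" "\<not> marked \<beta> Ep P u"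
  shows "\<not> bad \<beta> Ep C u"
    and "real (card {v \<in> C. bad \<beta> Ep C v}) < \<beta> * real (card C) / 3"
  using assms unfolding marked_def by auto

lemma marked_in_unmarked_cluster_bad:
  assumes "partition_on V P" "C \<in> P" "v \<in> C" "marked \<beta> Ep P v"
    and "real (card {w \<in> C. bad \<beta> Ep C w}) < \<beta> * real (card C) / 3"
  shows "bad \<beta> Ep C v"
proof -
  obtain C' where C': "C' \<in> P" "v \<in> C'"
    and "bad \<beta> Ep C' v \<or> real (card {w \<in> C'. bad \<beta> Ep C' w}) \<ge> \<beta> * real (card C') / 3"
    using assms(4) unfolding marked_def by blast
  moreover have "C' = C"
    using disjointD[OF partition_onD2[OF assms(1)] C'(1) assms(2)] C'(2) assms(3) by blast
  ultimately show ?thesis using assms(5) by auto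
qed

theorem nonsingleton_atom_symdiff_less:
  fixes \<beta> :: real
  assumes "cc_instance V Ep" "partition_on V P" "\<beta> \<le> 1/2"
    and "K \<in> atoms \<beta> Ep P" "card K \<ge> 2" "u \<in> K"
  shows "real (card (sym_diff (Nplus Ep u) K)) < \<beta> * real (card K)"
proof -
  let ?M = "{v. marked \<beta> Ep P v}"
  obtain C where C: "C \<in> P" "K = C - ?M"
    using nonsingleton_atomE[OF assms(4,5)] .
  have "finite C"
    using assms(1) C(1) partition_onD1[OF assms(2)] unfolding cc_instance_def
    by (meson Union_upper finite_subset)
  have "K \<subseteq> C" using C(2) by blast
  have "card C \<ge> 2" using card_mono[OF \<open>finite C\<close> \<open>K \<subseteq> C\<close>] assms(5) by linarith
  have "u \<in> C" "\<not> marked \<beta> Ep P u" using assms(6) C(2) by auto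
  note u_good = unmarkedD[OF C(1) \<open>card C \<ge> 2\<close> this]
  have close: "real (card (sym_diff (Nplus Ep u) C)) \<le> \<beta> / 2 * real (card C)"
    using u_good(1) \<open>u \<in> C\<close> unfolding bad_def by auto
  have "C - K \<subseteq> {v \<in> C. bad \<beta> Ep C v}"
    using marked_in_unmarked_cluster_bad[OF assms(2) C(1) _ _ u_good(2)] C(2) by blast
  then have "card (C - K) \<le> card {v \<in> C. bad \<beta> Ep C v}"
    using \<open>finite C\<close> by (simp add: card_mono)
  then have few_removed: "real (card (C - K)) < \<beta> / 3 * real (card C)"
    using u_good(2) by linarith
  show ?thesis
    by (rule card_symdiff_less_after_removal[OF finite_Nplus[OF assms(1)] \<open>finite C\<close>
          \<open>K \<subseteq> C\<close> \<open>\<beta> \<le> 1/2\<close> close few_removed])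
qed

theorem lemma7:
  fixes V :: "'a set" and Ep :: "'a set set" and \<C> :: "'a set set"
    and K :: "'a set" and u :: 'a
  assumes "cc_instance V Ep"
    and "partition_on V \<C>"
    and "obj V Ep \<C> \<le> 3 * opt V Ep"
    and "K \<in> atoms (1/10) Ep \<C>"
    and "card K \<ge> 2"
    and "u \<in> K"
  shows "real (card ((Nplus Ep u - K) \<union> (K - Nplus Ep u))) < (1/10) * real (card K)"
  using nonsingleton_atom_symdiff_less[OF assms(1,2) _ assms(4-6)] by simp

end
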